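(* Let $U,V\in\mathcal S$ and $\gamma\in\Gamma$. Then $\mathcal D(\gamma U,\gamma V)=\gamma\,\mathcal D(U,V)\,\gamma^{-1}$.
   Context: $\mathcal H$ = entire functions (uniform convergence on compacta). $\mathcal S$ = linear subspaces $V\subset\mathbb C[z]$ with $\rho\,\mathbb C[z]\subset V$ for some nonzero polynomial $\rho$. $\Gamma=\{e^{p(z)}:p\in\mathbb C[z]\}$, acting on $\mathcal S$ by $\gamma V=(\gamma\overline V)\cap\mathbb C[z]$, where $\overline V$ is the closure of $V$ in $\mathcal H$. For subspaces $U,V$, $\mathcal D(U,V)=\{D\in\mathbb C(z)[\partial]: D.U\subset V\}$, $\partial=d/dz$; $\gamma\mathcal D(U,V)\gamma^{-1}$ means conjugation by the multiplication operator $\gamma$. *)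

theory Defs
  imports "HOL-Analysis.Analysis" "HOL-Computational_Algebra.Computational_Algebra" "HOL-Computational_Algebra.Field_as_Ring"
begin

definition entire :: "(complex \<Rightarrow> complex) \<Rightarrow> bool" where
  "entire f \<longleftrightarrow> f holomorphic_on UNIV"

(* Closure in H (topology of uniform convergence on compacta) of a set V of
   polynomials (identified with the entire functions they define):
   f is in the closure iff every basic neighbourhood
   {g. sup_K |g - f| < eps} (K compact, eps > 0) meets V. *)
definition H_closure :: "complex poly set \<Rightarrow> (complex \<Rightarrow> complex) set" where
  "H_closure V = {f. entire f \<and>
     (\<forall>K. compact K \<longrightarrow> (\<forall>e>0. \<exists>v\<in>V. \<forall>z\<in>K. norm (f z - poly v z) < e))}"

definition classS :: "complex poly set set" where
  "classS = {V. 0 \<in> V \<and> (\<forall>u\<in>V. \<forall>v\<in>V. u + v \<in> V) \<and> (\<forall>c. \<forall>v\<in>V. smult c v \<in> V)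
              \<and> (\<exists>rho. rho \<noteq> 0 \<and> (\<forall>q. rho * q \<in> V))}"

(* Action of gamma = exp(p(z)) \<in> Gamma on subspaces:
   gamma V = (gamma * closure V) \<inter> C[z]. *)
definition gamma_act :: "complex poly \<Rightarrow> complex poly set \<Rightarrow> complex poly set" where
  "gamma_act p V = {q. \<exists>f\<in>H_closure V. \<forall>z. poly q z = exp (poly p z) * f z}"

(* Differential operators in C(z)[d]:  D = sum_k r_k d^k with r_k \<in> C(z).
   Represented by the (unique) coefficient sequence r_k = coeff D k; the type
   'poly' is used only as a container for finitely supported coefficient
   sequences (its ring multiplication is never used). *)
type_synonym diffop = "complex poly fract poly"

definition op_apply :: "diffop \<Rightarrow> complex poly \<Rightarrow> complex poly fract" where
  "op_apply D u = (\<Sum>k\<le>degree D. coeff D k * to_fract ((pderiv ^^ k) u))"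

definition Dops :: "complex poly set \<Rightarrow> complex poly set \<Rightarrow> diffop set" where
  "Dops U V = {D. \<forall>u\<in>U. \<exists>v\<in>V. op_apply D u = to_fract v}"

definition rat_eval :: "complex poly fract \<Rightarrow> complex \<Rightarrow> complex" where
  "rat_eval r z = poly (fst (quot_of_fract r)) z / poly (snd (quot_of_fract r)) z"

definition rat_pole :: "complex poly fract \<Rightarrow> complex \<Rightarrow> bool" where
  "rat_pole r z \<longleftrightarrow> poly (snd (quot_of_fract r)) z = 0"

definition op_eval :: "diffop \<Rightarrow> (complex \<Rightarrow> complex) \<Rightarrow> complex \<Rightarrow> complex" where
  "op_eval D f z = (\<Sum>k\<le>degree D. rat_eval (coeff D k) z * (deriv ^^ k) f z)"

definition op_regular_at :: "diffop \<Rightarrow> complex \<Rightarrow> bool" where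
  "op_regular_at D z \<longleftrightarrow> (\<forall>k. \<not> rat_pole (coeff D k) z)"

(* E = gamma D gamma^{-1} (conjugation by the multiplication operator
   gamma = exp(p(z))), as operators: for every entire f and every point z
   where the coefficients of D and E are regular,
   E f (z) = gamma(z) * D (gamma^{-1} f) (z). *)
definition conj_op :: "complex poly \<Rightarrow> diffop \<Rightarrow> diffop \<Rightarrow> bool" where
  "conj_op p D E \<longleftrightarrow> (\<forall>f. entire f \<longrightarrow> (\<forall>z. op_regular_at D z \<and> op_regular_at E z \<longrightarrow>
      op_eval E f z = exp (poly p z) * op_eval D (\<lambda>w. exp (- poly p w) * f w) z))"

end

(*
  An operator D with D.U \<subseteq> V extends to the closures of U and V in the entire functions: after
  clearing denominators it is continuous for compact convergence (Cauchy estimates), and dividing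
  a limit by a polynomial preserves approximability (maximum modulus principle). A rational
  function agreeing with an entire function off its poles is a polynomial, so conjugating by
  exp p sends D(U,V) into D(gamma U, gamma V). For the converse conjugate back by exp (-p) and use
  gamma_(-p) (gamma_p U) = U for U in S. This rests on U being closed in C[z]: the multiples of rho
  form a closed subspace, and adding one line at a time keeps a subspace closed.
*)

theory Submission
  imports Defs "HOL-Complex_Analysis.Complex_Analysis"
begin

section \<open>Values of rational functions\<close>

definition rat_has_value :: "complex poly fract \<Rightarrow> complex \<Rightarrow> complex \<Rightarrow> bool" where
  "rat_has_value r z c \<longleftrightarrow> \<not> rat_pole r z \<and> rat_eval r z = c"

lemma rat_has_value_Fract:
  assumes "poly d z \<noteq> 0"
  shows "rat_has_value (Fract n d) z (poly n z / poly d z)"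
proof -
  obtain n' d' where q: "quot_of_fract (Fract n d) = (n', d')" by fastforce
  have d0: "d \<noteq> 0" "d' \<noteq> 0"
    using assms snd_quot_of_fract_nonzero[of "Fract n d"] q by auto
  have "Fract n d = Fract n' d'" using Fract_quot_of_fract[of "Fract n d"] q by simp
  hence eq: "n * d' = n' * d" using eq_fract(1)[OF d0] by simp
  have "coprime n' d'" using coprime_quot_of_fract[of "Fract n d"] q by simp
  moreover have "d' dvd n' * d" using eq by (metis dvd_triv_right)
  ultimately have "d' dvd d" by (metis coprime_commute coprime_dvd_mult_right_iff)
  hence pd': "poly d' z \<noteq> 0" using assms by (auto elim: dvdE)
  have "poly n z * poly d' z = poly n' z * poly d z" using arg_cong[OF eq, of "\<lambda>p. poly p z"] by simp
  hence "poly n' z / poly d' z = poly n z / poly d z" using pd' assms by (simp add: field_simps)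
  thus ?thesis using pd' q unfolding rat_has_value_def rat_pole_def rat_eval_def by simp
qed

lemma not_rat_poleE:
  assumes "\<not> rat_pole r z"
  obtains n d where "r = Fract n d" "poly d z \<noteq> 0"
  using assms Fract_quot_of_fract[of r] unfolding rat_pole_def by (metis prod.collapse)

lemma rat_has_value_add:
  assumes "rat_has_value a z x" "rat_has_value b z y"
  shows "rat_has_value (a + b) z (x + y)"
proof -
  obtain n d where a: "a = Fract n d" "poly d z \<noteq> 0"
    using assms(1) not_rat_poleE unfolding rat_has_value_def by blast
  obtain m e where b: "b = Fract m e" "poly e z \<noteq> 0"
    using assms(2) not_rat_poleE unfolding rat_has_value_def by blast
  have "x = poly n z / poly d z" "y = poly m z / poly e z"
    using assms a b rat_has_value_Fract unfolding rat_has_value_def by metis+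
  moreover have "d \<noteq> 0" "e \<noteq> 0" using a(2) b(2) by auto
  hence "a + b = Fract (n * e + m * d) (d * e)" using a(1) b(1) by simp
  ultimately show ?thesis
    using rat_has_value_Fract[of "d * e" z "n * e + m * d"] a(2) b(2) by (simp add: add_frac_eq)
qed

lemma rat_has_value_mult:
  assumes "rat_has_value a z x" "rat_has_value b z y"
  shows "rat_has_value (a * b) z (x * y)"
proof -
  obtain n d where a: "a = Fract n d" "poly d z \<noteq> 0"
    using assms(1) not_rat_poleE unfolding rat_has_value_def by blast
  obtain m e where b: "b = Fract m e" "poly e z \<noteq> 0"
    using assms(2) not_rat_poleE unfolding rat_has_value_def by blast
  have "x = poly n z / poly d z" "y = poly m z / poly e z"
    using assms a b rat_has_value_Fract unfolding rat_has_value_def by metis+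
  moreover have "a * b = Fract (n * m) (d * e)" using a b by simp
  ultimately show ?thesis using rat_has_value_Fract[of "d * e" z "n * m"] a(2) b(2) by simp
qed

lemma rat_has_value_to_fract: "rat_has_value (to_fract q) z (poly q z)"
  using rat_has_value_Fract[of 1 z q] by (simp add: to_fract_def)

lemma rat_has_value_sum:
  assumes "\<And>i. i \<in> A \<Longrightarrow> rat_has_value (f i) z (c i)"
  shows "rat_has_value (sum f A) z (sum c A)"
  using assms
proof (induction A rule: infinite_finite_induct)
  case (infinite A)
  then show ?case using rat_has_value_to_fract[of 0 z] by simp
next
  case empty
  then show ?case using rat_has_value_to_fract[of 0 z] by simp
next
  case (insert x F)
  then show ?case by (simp add: rat_has_value_add)
qed

lemma continuous_eq_off_finite:
  fixes f g :: "complex \<Rightarrow> complex"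
  assumes "continuous_on UNIV f" "continuous_on UNIV g" "finite Z" "\<And>z. z \<notin> Z \<Longrightarrow> f z = g z"
  shows "f = g"
proof
  fix a
  have "eventually (\<lambda>z. z \<notin> Z) (at a)"
    using assms(3) by (metis finite_imp_sparse iso_tuple_UNIV_I open_UNIV sparse_in_eventually_iff)
  hence "eventually (\<lambda>z. g z = f z) (at a)" by (rule eventually_mono) (use assms(4) in auto)
  moreover have "(f \<longlongrightarrow> f a) (at a)" "(g \<longlongrightarrow> g a) (at a)"
    using assms(1,2) by (simp_all add: continuous_on_def)
  ultimately show "f a = g a" using tendsto_cong tendsto_unique trivial_limit_at by metis
qed

lemma linear_factorE:
  fixes q :: "complex poly"
  assumes "degree q \<noteq> 0"
  obtains a q' where "q = [:-a, 1:] * q'" "q' \<noteq> 0" "degree q' < degree q"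
proof -
  obtain a where "poly q a = 0" using assms alg_closed_imp_poly_has_root by blast
  then obtain q' where q: "q = [:-a, 1:] * q'" using poly_eq_0_iff_dvd by (metis dvdE)
  moreover have "q' \<noteq> 0" using assms q by auto
  moreover have "degree ([:-a, 1:] * q') = degree [:-a, 1:] + degree q'"
    using \<open>q' \<noteq> 0\<close> by (intro degree_mult_eq) auto
  ultimately show ?thesis using that by simp
qed

lemma poly_dvd_if_continuous_quotient:
  fixes w rho :: "complex poly"
  assumes "rho \<noteq> 0" "continuous_on UNIV g" "\<And>z. poly w z = poly rho z * g z"
  shows "rho dvd w"
  using assms
proof (induction "degree rho" arbitrary: rho w rule: less_induct)
  case less
  show ?case
  proof (cases "degree rho = 0")
    case True
    thus ?thesis using less.prems(1) is_unit_iff_degree unit_imp_dvd by blast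
  next
    case False
    then obtain a rho' where rho: "rho = [:-a, 1:] * rho'" "rho' \<noteq> 0" "degree rho' < degree rho"
      by (rule linear_factorE)
    have "poly w a = 0" using less.prems(3) rho(1) by simp
    then obtain w' where w: "w = [:-a, 1:] * w'" using poly_eq_0_iff_dvd by (metis dvdE)
    have "poly w' z = poly rho' z * g z" if "z \<notin> {a}" for z
    proof -
      have "(z - a) * poly w' z = (z - a) * (poly rho' z * g z)"
        using less.prems(3)[of z] unfolding w rho(1) by (simp add: algebra_simps)
      thus ?thesis using that by simp
    qed
    hence "poly w' = (\<lambda>z. poly rho' z * g z)"
      by (intro continuous_eq_off_finite[where Z = "{a}"] continuous_intros less.prems(2)) auto
    hence "rho' dvd w'" using less.hyps[OF rho(3) rho(2) less.prems(2)] by metis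
    thus ?thesis unfolding rho(1) w by (rule mult_dvd_mono[OF dvd_refl])
  qed
qed

text \<open>The reduced denominator divides the numerator, so it is 1.\<close>

lemma rat_eq_poly_if_continuous:
  assumes "finite Z" "continuous_on UNIV h" "\<And>z. z \<notin> Z \<Longrightarrow> rat_has_value r z (h z)"
  shows "\<exists>v. r = to_fract v \<and> (\<forall>z. poly v z = h z)"
proof -
  obtain n d where q: "quot_of_fract r = (n, d)" by fastforce
  have "poly n z = poly d z * h z" if "z \<notin> Z" for z
    using assms(3)[OF that] q unfolding rat_has_value_def rat_pole_def rat_eval_def
    by (auto simp: field_simps)
  hence "poly n = (\<lambda>z. poly d z * h z)"
    by (intro continuous_eq_off_finite[OF _ _ assms(1)] continuous_intros assms(2)) auto
  hence nd: "poly n z = poly d z * h z" for z by metis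
  have "d \<noteq> 0" using snd_quot_of_fract_nonzero[of r] q by simp
  hence "d dvd n" using poly_dvd_if_continuous_quotient assms(2) nd by blast
  moreover have "coprime n d" using coprime_quot_of_fract[of r] q by simp
  ultimately have "is_unit d" by (meson coprime_common_divisor dvd_refl)
  moreover have "normalize d = d" using normalize_snd_quot_of_fract[of r] q by simp
  ultimately have "d = 1" by (metis is_unit_normalize)
  thus ?thesis using Fract_quot_of_fract[of r] q nd by (auto simp: to_fract_def)
qed

lemma higher_deriv_poly: "(deriv ^^ k) (poly (u :: complex poly)) = poly ((pderiv ^^ k) u)"
proof (induction k)
  case (Suc k)
  have deriv_poly: "deriv (poly q) = poly (pderiv q)" for q :: "complex poly"
    by (rule ext) (rule DERIV_imp_deriv, rule poly_DERIV)
  show ?case using Suc by (simp add: deriv_poly)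
qed simp

lemma op_apply_has_value:
  assumes "op_regular_at D z"
  shows "rat_has_value (op_apply D u) z (op_eval D (poly u) z)"
proof -
  have "rat_has_value (coeff D k) z (rat_eval (coeff D k) z)" for k
    using assms unfolding op_regular_at_def rat_has_value_def by simp
  thus ?thesis
    unfolding op_apply_def op_eval_def higher_deriv_poly
    by (intro rat_has_value_sum rat_has_value_mult rat_has_value_to_fract)
qed

lemma finite_not_op_regular: "finite {z. \<not> op_regular_at D z}"
proof -
  have "rat_pole (coeff D k) z \<Longrightarrow> k \<le> degree D" for k z
    by (rule ccontr) (simp add: coeff_eq_0 rat_pole_def)
  hence "{z. \<not> op_regular_at D z} \<subseteq> (\<Union>k\<le>degree D. {z. poly (snd (quot_of_fract (coeff D k))) z = 0})"
    unfolding op_regular_at_def by (auto simp: rat_pole_def)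
  moreover have "finite (\<Union>k\<le>degree D. {z. poly (snd (quot_of_fract (coeff D k))) z = 0})"
    by (intro finite_UN_I finite_atMost poly_roots_finite snd_quot_of_fract_nonzero)
  ultimately show ?thesis by (rule finite_subset)
qed

lemma op_apply_eq_poly:
  assumes "finite Z" "continuous_on UNIV h"
    and "\<And>z. z \<notin> Z \<Longrightarrow> op_regular_at D z \<Longrightarrow> op_eval D (poly u) z = h z"
  shows "\<exists>w. op_apply D u = to_fract w \<and> (\<forall>z. poly w z = h z)"
proof (rule rat_eq_poly_if_continuous)
  show "finite (Z \<union> {z. \<not> op_regular_at D z})" using assms(1) finite_not_op_regular by simp
  show "rat_has_value (op_apply D u) z (h z)" if "z \<notin> Z \<union> {z. \<not> op_regular_at D z}" for z
    using that op_apply_has_value[of D z u] assms(3) by simp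
qed (use assms(2) in simp)

section \<open>Compact convergence of entire functions\<close>

lemma entire_poly [simp]: "entire (poly p)"
  unfolding entire_def by (simp add: holomorphic_intros)

lemma entire_imp_continuous_on: "entire f \<Longrightarrow> continuous_on S f"
  unfolding entire_def by (meson holomorphic_on_imp_continuous_on holomorphic_on_subset subset_UNIV)

lemma entire_exp_poly_mult: "entire f \<Longrightarrow> entire (\<lambda>z. exp (poly p z) * f z)"
  unfolding entire_def by (intro holomorphic_intros) auto

lemma compact_norm_bound:
  fixes f :: "complex \<Rightarrow> 'b::real_normed_vector"
  assumes "compact K" "continuous_on K f"
  obtains M where "M > 0" "\<And>z. z \<in> K \<Longrightarrow> norm (f z) \<le> M"
  using compact_imp_bounded[OF compact_continuous_image[OF assms(2,1)]] unfolding bounded_pos by auto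

lemma entire_divide_linear:
  assumes "entire F"
  obtains F1 where "entire F1" "\<And>z. F z = F a + (z - a) * F1 z"
proof -
  define F1 where "F1 = (\<lambda>z. if z = a then deriv F a else (F z - F a) / (z - a))"
  have "entire F1" using pole_lemma_open[of F UNIV a] assms unfolding entire_def F1_def by simp
  moreover have "F z = F a + (z - a) * F1 z" for z unfolding F1_def by auto
  ultimately show ?thesis using that by blast
qed

lemma higher_deriv_diff_bound:
  assumes "entire F" "entire G" "\<And>w. w \<in> cball z 1 \<Longrightarrow> norm (F w - G w) < d"
  shows "norm ((deriv ^^ k) F z - (deriv ^^ k) G z) \<le> fact k * d"
proof (cases "k = 0")
  case True
  thus ?thesis using assms(3)[of z] by simp
next
  case False
  have hol: "F holomorphic_on UNIV" "G holomorphic_on UNIV" using assms unfolding entire_def by auto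
  have "norm ((deriv ^^ k) (\<lambda>w. F w - G w) z) \<le> fact k * d / 1 ^ k"
  proof (rule Cauchy_higher_deriv_bound[where y = 0])
    show "(\<lambda>w. F w - G w) holomorphic_on ball z 1"
      using hol by (intro holomorphic_intros) (auto intro: holomorphic_on_subset)
    show "continuous_on (cball z 1) (\<lambda>w. F w - G w)"
      using assms(1,2) by (intro continuous_intros entire_imp_continuous_on)
    show "F w - G w \<in> ball 0 d" if "w \<in> ball z 1" for w
      using assms(3)[of w] that by (simp add: dist_0_norm)
  qed (use False in auto)
  thus ?thesis using higher_deriv_diff[OF hol] by simp
qed

definition compactly_approximable :: "(complex \<Rightarrow> complex) set \<Rightarrow> (complex \<Rightarrow> complex) \<Rightarrow> bool" where
  "compactly_approximable A f \<longleftrightarrow>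
     (\<forall>K e. compact K \<longrightarrow> e > 0 \<longrightarrow> (\<exists>a\<in>A. \<forall>z\<in>K. norm (f z - a z) < e))"

lemma compactly_approximableI:
  "(\<And>K e. compact K \<Longrightarrow> e > 0 \<Longrightarrow> \<exists>a\<in>A. \<forall>z\<in>K. norm (f z - a z) < e) \<Longrightarrow> compactly_approximable A f"
  unfolding compactly_approximable_def by blast

lemma compactly_approximableD:
  "compactly_approximable A f \<Longrightarrow> compact K \<Longrightarrow> e > 0 \<Longrightarrow> \<exists>a\<in>A. \<forall>z\<in>K. norm (f z - a z) < e"
  unfolding compactly_approximable_def by blast

lemma H_closure_iff: "f \<in> H_closure V \<longleftrightarrow> entire f \<and> compactly_approximable (poly ` V) f"
  unfolding H_closure_def compactly_approximable_def by auto

lemma compactly_approximable_refl: "f \<in> A \<Longrightarrow> compactly_approximable A f"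
  unfolding compactly_approximable_def by force

lemma compactly_approximable_mono: "compactly_approximable A f \<Longrightarrow> A \<subseteq> B \<Longrightarrow> compactly_approximable B f"
  unfolding compactly_approximable_def by blast

lemma compactly_approximable_trans:
  assumes "compactly_approximable A f" "\<And>a. a \<in> A \<Longrightarrow> compactly_approximable B a"
  shows "compactly_approximable B f"
proof (rule compactly_approximableI)
  fix K :: "complex set" and e :: real
  assume K: "compact K" and e: "e > 0"
  have e2: "e / 2 > 0" using e by simp
  then obtain a where a: "a \<in> A" "\<forall>z\<in>K. norm (f z - a z) < e / 2"
    using compactly_approximableD[OF assms(1) K] by blast
  then obtain b where b: "b \<in> B" "\<forall>z\<in>K. norm (a z - b z) < e / 2"
    using compactly_approximableD[OF assms(2)[OF a(1)] K e2] by blast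
  have "norm (f z - b z) < e" if "z \<in> K" for z
  proof -
    have "norm (f z - b z) \<le> norm (f z - a z) + norm (a z - b z)"
      using norm_triangle_ineq[of "f z - a z" "a z - b z"] by simp
    moreover have "norm (f z - a z) < e / 2" "norm (a z - b z) < e / 2" using a(2) b(2) that by auto
    ultimately show ?thesis by linarith
  qed
  thus "\<exists>b\<in>B. \<forall>z\<in>K. norm (f z - b z) < e" using b(1) by blast
qed

lemma compactly_approximable_affine:
  assumes "continuous_on UNIV m" "compactly_approximable A f"
  shows "compactly_approximable ((\<lambda>a z. c z + m z * a z) ` A) (\<lambda>z. c z + m z * f z)"
proof (rule compactly_approximableI)
  fix K :: "complex set" and e :: real
  assume K: "compact K" and e: "e > 0"
  have "continuous_on K m" using assms(1) by (rule continuous_on_subset) simp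
  then obtain M where M: "M > 0" "\<And>z. z \<in> K \<Longrightarrow> norm (m z) \<le> M"
    using compact_norm_bound[OF K] by blast
  have "e / M > 0" using e M(1) by simp
  then obtain a where a: "a \<in> A" "\<forall>z\<in>K. norm (f z - a z) < e / M"
    using compactly_approximableD[OF assms(2) K] by blast
  have "norm (c z + m z * f z - (c z + m z * a z)) < e" if "z \<in> K" for z
  proof -
    have "c z + m z * f z - (c z + m z * a z) = m z * (f z - a z)" by (simp add: algebra_simps)
    hence "norm (c z + m z * f z - (c z + m z * a z)) = norm (m z) * norm (f z - a z)"
      by (simp add: norm_mult)
    also have "\<dots> \<le> M * norm (f z - a z)" using M(2) that by (intro mult_right_mono) auto
    also have "\<dots> < M * (e / M)" using a(2) that M(1) by (intro mult_strict_left_mono) auto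
    finally show ?thesis using M(1) by simp
  qed
  thus "\<exists>b\<in>(\<lambda>a z. c z + m z * a z) ` A. \<forall>z\<in>K. norm (c z + m z * f z - b z) < e"
    using a(1) by (intro bexI[of _ "\<lambda>z. c z + m z * a z"]) auto
qed

text \<open>Taylor polynomials at 0 of an entire function converge to it uniformly on every disc.\<close>

lemma entire_compactly_approximable_by_polys:
  assumes "entire F"
  shows "compactly_approximable (range poly) F"
proof (rule compactly_approximableI)
  fix K :: "complex set" and e :: real
  assume K: "compact K" and e: "e > 0"
  obtain R where R: "R > 0" "K \<subseteq> ball 0 R" using bounded_subset_ballD[OF compact_imp_bounded[OF K]] by blast
  define a where "a n = (deriv ^^ n) F 0 / fact n" for n
  have sums: "(\<lambda>n. a n * z ^ n) sums F z" for z
    using holomorphic_power_series[of F 0 "norm z + 1" z] assms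
    unfolding entire_def a_def by (auto intro: holomorphic_on_subset)
  have "ereal R < ereal (norm (of_real (R + 1) :: complex))" using R(1) by simp
  also have "\<dots> \<le> conv_radius a"
    using sums by (intro conv_radius_geI) (auto simp: sums_iff)
  finally have "ereal R < conv_radius a" .
  hence "uniform_limit (cball 0 R) (\<lambda>n x. \<Sum>i<n. a i * (x - 0) ^ i) (\<lambda>x. \<Sum>i. a i * (x - 0) ^ i) sequentially"
    by (rule powser_uniform_limit)
  hence "\<forall>\<^sub>F n in sequentially. \<forall>x\<in>cball 0 R. dist (\<Sum>i<n. a i * (x - 0) ^ i) (\<Sum>i. a i * (x - 0) ^ i) < e"
    by (rule uniform_limitD[OF _ e])
  then obtain n where n: "\<forall>x\<in>cball 0 R. dist (\<Sum>i<n. a i * (x - 0) ^ i) (\<Sum>i. a i * (x - 0) ^ i) < e"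
    unfolding eventually_sequentially by blast
  have "norm (F z - poly (\<Sum>i<n. monom (a i) i) z) < e" if "z \<in> K" for z
  proof -
    have "z \<in> cball 0 R" using that R(2) by auto
    thus ?thesis using n sums_unique[OF sums[of z]]
      by (auto simp: poly_sum poly_monom dist_norm norm_minus_commute)
  qed
  thus "\<exists>p\<in>range poly. \<forall>z\<in>K. norm (F z - p z) < e"
    by (intro bexI[of _ "poly (\<Sum>i<n. monom (a i) i)"]) auto
qed

text \<open>By the maximum modulus principle on a disc of radius \<open>R \<ge> 1\<close> around \<open>a\<close>, a bound for
  \<open>(z - a) * (F - b)\<close> on the disc is also a bound for \<open>F - b\<close>.\<close>

lemma compactly_approximable_cancel_linear:
  assumes "entire F" "\<And>b. b \<in> B \<Longrightarrow> entire b"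
    and "compactly_approximable ((\<lambda>b z. (z - a) * b z) ` B) (\<lambda>z. (z - a) * F z)"
  shows "compactly_approximable B F"
proof (rule compactly_approximableI)
  fix K :: "complex set" and e :: real
  assume K: "compact K" and e: "e > 0"
  obtain r where r: "r > 0" "K \<subseteq> ball a r" using bounded_subset_ballD[OF compact_imp_bounded[OF K]] by blast
  define R where "R = max r 1"
  have R: "R \<ge> 1" "K \<subseteq> cball a R" using r unfolding R_def by auto
  have "e / 2 > 0" using e by simp
  then obtain b where b: "b \<in> B" "\<forall>z\<in>cball a R. norm ((z - a) * F z - (z - a) * b z) < e / 2"
    using compactly_approximableD[OF assms(3) compact_cball[of a R]] by blast
  have sphere: "norm (F z - b z) \<le> e / 2" if "z \<in> frontier (cball a R)" for z
  proof -
    have "(z - a) * F z - (z - a) * b z = (z - a) * (F z - b z)" by (simp add: algebra_simps)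
    hence "R * norm (F z - b z) = norm ((z - a) * F z - (z - a) * b z)"
      using that R(1) by (simp add: frontier_cball dist_norm norm_minus_commute norm_mult)
    also have "\<dots> < e / 2" using b(2) that R(1) by (simp add: frontier_cball)
    finally show ?thesis using R(1) by (smt (verit) mult_le_cancel_right1 norm_ge_zero)
  qed
  have "norm (F z - b z) \<le> e / 2" if "z \<in> cball a R" for z
  proof (rule maximum_modulus_frontier[of "\<lambda>z. F z - b z" "cball a R"])
    have "entire (\<lambda>z. F z - b z)" using assms(1,2) b(1) unfolding entire_def by (intro holomorphic_intros) auto
    thus "(\<lambda>z. F z - b z) holomorphic_on interior (cball a R)"
      "continuous_on (closure (cball a R)) (\<lambda>z. F z - b z)"
      unfolding entire_def by (auto intro: holomorphic_on_subset holomorphic_on_imp_continuous_on)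
  qed (use that sphere in auto)
  thus "\<exists>b\<in>B. \<forall>z\<in>K. norm (F z - b z) < e" using b(1) R(2) e by force
qed

lemma compactly_approximable_vanishing:
  assumes "compactly_approximable A F" "\<And>b. b \<in> A \<Longrightarrow> b a = 0"
  shows "F a = 0"
proof -
  have "norm (F a) < e" if "e > 0" for e
    using compactly_approximableD[OF assms(1) compact_sing[of a] that] assms(2) by force
  thus ?thesis by (metis less_irrefl norm_le_zero_iff not_less)
qed

lemma compactly_approximable_divide_poly:
  assumes "Q \<noteq> 0" "entire F" "\<And>a. a \<in> A \<Longrightarrow> entire a"
    and "compactly_approximable ((\<lambda>a z. poly Q z * a z) ` A) F"
  shows "\<exists>g. entire g \<and> (\<forall>z. F z = poly Q z * g z) \<and> compactly_approximable A g"
  using assms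
proof (induction "degree Q" arbitrary: Q F rule: less_induct)
  case less
  show ?case
  proof (cases "degree Q = 0")
    case True
    then obtain c where Q: "Q = [:c:]" "c \<noteq> 0" using less.prems(1) by (metis degree_eq_zeroE pCons_0_0)
    have "compactly_approximable ((\<lambda>b z. 0 + inverse c * b z) ` (\<lambda>a z. poly Q z * a z) ` A)
        (\<lambda>z. 0 + inverse c * F z)"
      by (intro compactly_approximable_affine less.prems(4) continuous_intros)
    moreover have "(\<lambda>b z. 0 + inverse c * b z) ` (\<lambda>a z. poly Q z * a z) ` A = A"
      using Q by (simp add: image_image field_simps)
    ultimately have "compactly_approximable A (\<lambda>z. inverse c * F z)" by simp
    moreover have "entire (\<lambda>z. inverse c * F z)"
      using less.prems(2) unfolding entire_def by (intro holomorphic_intros) auto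
    moreover have "F z = poly Q z * (inverse c * F z)" for z using Q by simp
    ultimately show ?thesis by blast
  next
    case False
    then obtain a Q' where Q: "Q = [:-a, 1:] * Q'" "Q' \<noteq> 0" "degree Q' < degree Q"
      by (rule linear_factorE)
    have "F a = 0"
      by (rule compactly_approximable_vanishing[OF less.prems(4)]) (auto simp: Q(1))
    then obtain F1 where F1: "entire F1" "\<And>z. F z = (z - a) * F1 z"
      using entire_divide_linear[OF less.prems(2), of a] by (metis add_0)
    let ?B = "(\<lambda>b z. poly Q' z * b z) ` A"
    have "(\<lambda>b z. (z - a) * b z) ` ?B = (\<lambda>b z. poly Q z * b z) ` A"
      unfolding Q(1) by (simp add: image_image algebra_simps)
    moreover have "F = (\<lambda>z. (z - a) * F1 z)" using F1(2) by (rule ext)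
    ultimately have "compactly_approximable ((\<lambda>b z. (z - a) * b z) ` ?B) (\<lambda>z. (z - a) * F1 z)"
      using less.prems(4) by simp
    moreover have "entire b" if "b \<in> ?B" for b
      using that less.prems(3) unfolding entire_def by (auto intro!: holomorphic_intros)
    ultimately have "compactly_approximable ?B F1"
      using compactly_approximable_cancel_linear[OF F1(1)] by blast
    then obtain g where g: "entire g" "\<forall>z. F1 z = poly Q' z * g z" "compactly_approximable A g"
      using less.hyps[OF Q(3) Q(2) F1(1) less.prems(3)] by blast
    have "F z = poly Q z * g z" for z
      using F1(2)[of z] g(2) unfolding Q(1) by (simp add: algebra_simps)
    thus ?thesis using g(1,3) by blast
  qed
qed

section \<open>Closedness of the spaces in \<open>S\<close>\<close>

definition poly_closed :: "complex poly set \<Rightarrow> bool" where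
  "poly_closed W \<longleftrightarrow> (\<forall>w. compactly_approximable (poly ` W) (poly w) \<longrightarrow> w \<in> W)"

definition poly_subspace :: "complex poly set \<Rightarrow> bool" where
  "poly_subspace W \<longleftrightarrow> 0 \<in> W \<and> (\<forall>u\<in>W. \<forall>v\<in>W. u + v \<in> W) \<and> (\<forall>c. \<forall>v\<in>W. smult c v \<in> W)"

lemma poly_closedD: "poly_closed W \<Longrightarrow> compactly_approximable (poly ` W) (poly w) \<Longrightarrow> w \<in> W"
  unfolding poly_closed_def by blast

lemma poly_subspace_diff:
  assumes "poly_subspace W" "u \<in> W" "v \<in> W"
  shows "u - v \<in> W"
proof -
  have "u + smult (-1) v \<in> W" using assms unfolding poly_subspace_def by blast
  thus ?thesis by simp
qed

lemma poly_closed_multiples: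
  fixes rho :: "complex poly"
  assumes "rho \<noteq> 0"
  shows "poly_closed {w. rho dvd w}"
  unfolding poly_closed_def
proof (intro allI impI)
  fix y
  assume "compactly_approximable (poly ` {w. rho dvd w}) (poly y)"
  moreover have "poly ` {w. rho dvd w} \<subseteq> (\<lambda>a z. poly rho z * a z) ` range poly"
  proof
    fix f assume "f \<in> poly ` {w. rho dvd w}"
    then obtain q where "f = poly (rho * q)" by (auto elim: dvdE)
    thus "f \<in> (\<lambda>a z. poly rho z * a z) ` range poly"
      by (intro image_eqI[of _ _ "poly q"]) (auto simp: fun_eq_iff)
  qed
  ultimately have approx: "compactly_approximable ((\<lambda>a z. poly rho z * a z) ` range poly) (poly y)"
    by (rule compactly_approximable_mono)
  have "\<And>a. a \<in> range poly \<Longrightarrow> entire a" by auto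
  then obtain g where "entire g" "\<forall>z. poly y z = poly rho z * g z"
    using compactly_approximable_divide_poly[OF assms entire_poly _ approx] by blast
  thus "y \<in> {w. rho dvd w}"
    using poly_dvd_if_continuous_quotient[OF assms entire_imp_continuous_on, of g y] by simp
qed

lemma poly_closed_limit_of_line_approximants:
  assumes W: "poly_closed W" "\<And>n. w n \<in> W"
    and approx: "\<And>n z. z \<in> cball 0 (real n) \<Longrightarrow>
      norm (poly y z - poly (w n) z - c n * poly x z) < 1 / (real n + 1)"
    and lim: "strict_mono r" "(c \<circ> r) \<longlonglongrightarrow> l"
  shows "y - smult l x \<in> W"
proof (rule poly_closedD[OF W(1)], rule compactly_approximableI)
  fix K :: "complex set" and e :: real
  assume K: "compact K" and e: "e > 0"
  obtain X where X: "X > 0" "\<And>z. z \<in> K \<Longrightarrow> norm (poly x z) \<le> X"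
    using compact_norm_bound[OF K entire_imp_continuous_on[OF entire_poly]] by blast
  obtain R where R: "K \<subseteq> ball 0 R" using bounded_subset_ballD[OF compact_imp_bounded[OF K]] by blast
  have "e / (2 * X) > 0" using e X(1) by simp
  then obtain N1 where N1: "\<And>n. n \<ge> N1 \<Longrightarrow> norm (c (r n) - l) < e / (2 * X)"
    using LIMSEQ_D[OF lim(2)] by auto
  define n where "n = max N1 (nat \<lceil>max R (2 / e)\<rceil>)"
  have "nat \<lceil>max R (2 / e)\<rceil> \<le> r n" using seq_suble[OF lim(1), of n] unfolding n_def by simp
  hence "real (nat \<lceil>max R (2 / e)\<rceil>) \<le> real (r n)" by simp
  hence big: "max R (2 / e) \<le> real (r n)" using real_nat_ceiling_ge[of "max R (2 / e)"] by linarith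
  hence Kn: "K \<subseteq> cball 0 (real (r n))" using R by (auto simp: subset_iff)
  have "2 / e < real (r n) + 1" using big by linarith
  hence small: "1 / (real (r n) + 1) < e / 2" using e by (simp add: field_simps)
  have "norm (poly (y - smult l x) z - poly (w (r n)) z) < e" if z: "z \<in> K" for z
  proof -
    have "poly (y - smult l x) z - poly (w (r n)) z =
        (poly y z - poly (w (r n)) z - c (r n) * poly x z) + (c (r n) - l) * poly x z"
      by (simp add: algebra_simps)
    hence "norm (poly (y - smult l x) z - poly (w (r n)) z) \<le>
        norm (poly y z - poly (w (r n)) z - c (r n) * poly x z) + norm ((c (r n) - l) * poly x z)"
      by (simp only: norm_triangle_ineq)
    moreover have "norm (poly y z - poly (w (r n)) z - c (r n) * poly x z) < 1 / (real (r n) + 1)"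
      using approx Kn z by blast
    moreover have "norm ((c (r n) - l) * poly x z) \<le> e / (2 * X) * X"
      unfolding norm_mult using N1[of n] X z e unfolding n_def by (intro mult_mono) auto
    moreover have "e / (2 * X) * X = e / 2" using X(1) by simp
    ultimately show ?thesis using small by linarith
  qed
  thus "\<exists>v\<in>poly ` W. \<forall>z\<in>K. norm (poly (y - smult l x) z - v z) < e"
    using W(2) by (intro bexI[of _ "poly (w (r n))"]) auto
qed

text \<open>Bolzano--Weierstrass on the bounded coefficients of the approximants.\<close>

lemma approximable_by_line_bounded_coeff:
  assumes "poly_closed W"
    and "compactly_approximable (poly ` {w + smult c x | w c. w \<in> W \<and> norm c \<le> B}) (poly y)"
  shows "\<exists>l. y - smult l x \<in> W"
proof -
  have "\<exists>w c. w \<in> W \<and> norm c \<le> B \<and>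
      (\<forall>z\<in>cball 0 (real n). norm (poly y z - poly w z - c * poly x z) < 1 / (real n + 1))" for n
  proof -
    have "1 / (real n + 1) > 0" by simp
    then obtain v where "v \<in> poly ` {w + smult c x | w c. w \<in> W \<and> norm c \<le> B}"
        "\<forall>z\<in>cball 0 (real n). norm (poly y z - v z) < 1 / (real n + 1)"
      using compactly_approximableD[OF assms(2) compact_cball[of 0 "real n"]] by blast
    moreover from this(1) obtain w c where "w \<in> W" "norm c \<le> B" "v = poly (w + smult c x)" by blast
    ultimately show ?thesis by (intro exI[of _ w] exI[of _ c]) (auto simp: algebra_simps)
  qed
  then obtain w c where wc: "\<And>n. w n \<in> W" "\<And>n. norm (c n) \<le> B"
    "\<And>n z. z \<in> cball 0 (real n) \<Longrightarrow> norm (poly y z - poly (w n) z - c n * poly x z) < 1 / (real n + 1)"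
    by metis
  have "\<forall>n. c n \<in> cball 0 B" using wc(2) by simp
  then obtain l r where "strict_mono r" "(c \<circ> r) \<longlonglongrightarrow> l"
    using seq_compactE[OF compact_imp_seq_compact[OF compact_cball]] by blast
  thus ?thesis
    using poly_closed_limit_of_line_approximants[where w = w and c = c, OF assms(1) wc(1) wc(3)] by blast
qed

lemma approximant_with_large_coeff:
  assumes y: "compactly_approximable (poly ` {w + smult c x | w c. w \<in> W}) (poly y)"
    and unbounded: "\<not> compactly_approximable (poly ` {w + smult c x | w c. w \<in> W \<and> norm c \<le> B}) (poly y)"
    and K': "compact K'"
  obtains w c where "w \<in> W" "norm c > B" "\<forall>z\<in>K'. norm (poly y z - poly (w + smult c x) z) < 1"
proof -
  obtain K e where Ke: "compact K" "e > 0"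
    "\<not> (\<exists>v\<in>poly ` {w + smult c x | w c. w \<in> W \<and> norm c \<le> B}. \<forall>z\<in>K. norm (poly y z - v z) < e)"
    using unbounded unfolding compactly_approximable_def by blast
  have "min e 1 > 0" using Ke(2) by simp
  then obtain v where v: "v \<in> poly ` {w + smult c x | w c. w \<in> W}" "\<forall>z\<in>K \<union> K'. norm (poly y z - v z) < min e 1"
    using compactly_approximableD[OF y compact_Un[OF Ke(1) K']] by blast
  then obtain w c where "w \<in> W" "v = poly (w + smult c x)" by blast
  with v(2) have wc: "w \<in> W" "\<forall>z\<in>K \<union> K'. norm (poly y z - poly (w + smult c x) z) < min e 1"
    by simp_all
  have "norm c > B"
  proof (rule ccontr)
    assume "\<not> norm c > B"
    have "\<exists>v\<in>poly ` {w + smult c x | w c. w \<in> W \<and> norm c \<le> B}. \<forall>z\<in>K. norm (poly y z - v z) < e"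
    proof (rule bexI[of _ "poly (w + smult c x)"])
      show "\<forall>z\<in>K. norm (poly y z - poly (w + smult c x) z) < e" using wc(2) by auto
      show "poly (w + smult c x) \<in> poly ` {w + smult c x | w c. w \<in> W \<and> norm c \<le> B}"
        using wc(1) \<open>\<not> norm c > B\<close> by (intro imageI CollectI exI[of _ w] exI[of _ c]) simp
    qed
    with Ke(3) show False by contradiction
  qed
  moreover have "\<forall>z\<in>K'. norm (poly y z - poly (w + smult c x) z) < 1" using wc(2) by auto
  ultimately show ?thesis using that wc(1) by blast
qed

text \<open>With unbounded coefficients, dividing the approximants by their coefficient approximates
  the direction \<open>x\<close> itself.\<close>

lemma approximable_by_line_unbounded_coeff:
  assumes W: "poly_subspace W" "poly_closed W"
    and y: "compactly_approximable (poly ` {w + smult c x | w c. w \<in> W}) (poly y)"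
    and unbounded: "\<And>B. \<not> compactly_approximable (poly ` {w + smult c x | w c. w \<in> W \<and> norm c \<le> B}) (poly y)"
  shows "x \<in> W"
proof (rule poly_closedD[OF W(2)], rule compactly_approximableI)
  fix K' :: "complex set" and e' :: real
  assume K': "compact K'" and e': "e' > 0"
  obtain Y where Y: "Y > 0" "\<And>z. z \<in> K' \<Longrightarrow> norm (poly y z) \<le> Y"
    using compact_norm_bound[OF K' entire_imp_continuous_on[OF entire_poly]] by blast
  obtain w c where wc: "w \<in> W" "norm c > (Y + 1) / e'"
      "\<forall>z\<in>K'. norm (poly y z - poly (w + smult c x) z) < 1"
    using approximant_with_large_coeff[OF y unbounded K'] by blast
  have c0: "norm c > 0" using wc(2) Y(1) e' by (smt (verit) divide_pos_pos)
  have "norm (poly x z - poly (smult (- 1 / c) w) z) < e'" if z: "z \<in> K'" for z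
  proof -
    have "c \<noteq> 0" using c0 by auto
    hence "poly x z - poly (smult (- 1 / c) w) z = (poly w z + c * poly x z) / c"
      by (simp add: add_divide_distrib)
    hence "norm (poly x z - poly (smult (- 1 / c) w) z) = norm (poly w z + c * poly x z) / norm c"
      by (simp add: norm_divide)
    also have "\<dots> < (Y + 1) / norm c"
    proof (rule divide_strict_right_mono[OF _ c0])
      have "norm (poly w z + c * poly x z) \<le> norm (poly y z) + norm (poly y z - poly (w + smult c x) z)"
        using norm_triangle_ineq4[of "poly y z" "poly y z - poly (w + smult c x) z"] by simp
      thus "norm (poly w z + c * poly x z) < Y + 1" using Y(2)[OF z] wc(3) z by fastforce
    qed
    also have "\<dots> < e'" using wc(2) c0 e' by (simp add: pos_divide_less_eq mult.commute)
    finally show ?thesis .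
  qed
  moreover have "smult (- 1 / c) w \<in> W" using W(1) wc(1) unfolding poly_subspace_def by blast
  ultimately show "\<exists>v\<in>poly ` W. \<forall>z\<in>K'. norm (poly x z - v z) < e'"
    by (intro bexI[of _ "poly (smult (- 1 / c) w)"]) auto
qed

lemma poly_closed_add_line:
  assumes "poly_subspace W" "poly_closed W"
  shows "poly_closed {w + smult c x | w c. w \<in> W}"
  unfolding poly_closed_def
proof (intro allI impI)
  fix y
  assume y: "compactly_approximable (poly ` {w + smult c x | w c. w \<in> W}) (poly y)"
  show "y \<in> {w + smult c x | w c. w \<in> W}"
  proof (cases "\<exists>B. compactly_approximable (poly ` {w + smult c x | w c. w \<in> W \<and> norm c \<le> B}) (poly y)")
    case True
    then obtain l where "y - smult l x \<in> W"
      using approximable_by_line_bounded_coeff[OF assms(2)] by blast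
    thus ?thesis by (intro CollectI exI[of _ "y - smult l x"] exI[of _ l]) simp
  next
    case False
    hence "x \<in> W" using approximable_by_line_unbounded_coeff[OF assms y] by blast
    hence "{w + smult c x | w c. w \<in> W} \<subseteq> W"
      using assms(1) unfolding poly_subspace_def by blast
    hence "poly ` {w + smult c x | w c. w \<in> W} \<subseteq> poly ` W" by (rule image_mono)
    hence "y \<in> W" using poly_closedD[OF assms(2) compactly_approximable_mono[OF y]] by blast
    thus ?thesis by (intro CollectI exI[of _ y] exI[of _ 0]) simp
  qed
qed

lemma mod_filtration_step:
  fixes rho :: "complex poly" and W :: "complex poly set"
  defines "S \<equiv> \<lambda>d. {w \<in> W. \<forall>i\<ge>d. coeff (w mod rho) i = 0}"
  assumes W: "poly_subspace W"
  shows "S (Suc d) = S d \<or> (\<exists>x. S (Suc d) = {w + smult c x | w c. w \<in> S d})"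
proof -
  have ge_split: "(\<forall>i\<ge>d. P i) \<longleftrightarrow> P d \<and> (\<forall>i\<ge>Suc d. P i)" for P :: "nat \<Rightarrow> bool"
    by (auto simp: Suc_le_eq dest: le_imp_less_or_eq)
  have sub: "poly_subspace (S k)" for k
    using W unfolding poly_subspace_def S_def by (auto simp: poly_mod_add_left mod_smult_left)
  show ?thesis
  proof (cases "\<exists>x\<in>S (Suc d). coeff (x mod rho) d \<noteq> 0")
    case True
    then obtain x where x: "x \<in> S (Suc d)" "coeff (x mod rho) d \<noteq> 0" by blast
    have "S (Suc d) = {w + smult c x | w c. w \<in> S d}"
    proof
      show "S (Suc d) \<subseteq> {w + smult c x | w c. w \<in> S d}"
      proof
        fix w assume w: "w \<in> S (Suc d)"
        define c where "c = coeff (w mod rho) d / coeff (x mod rho) d"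
        have "w - smult c x \<in> S (Suc d)"
          using poly_subspace_diff[OF sub w] sub x(1) unfolding poly_subspace_def by blast
        moreover have "coeff ((w - smult c x) mod rho) d = 0"
          using x(2) by (simp add: poly_mod_diff_left mod_smult_left c_def)
        ultimately have "w - smult c x \<in> S d" unfolding S_def ge_split by blast
        thus "w \<in> {w + smult c x | w c. w \<in> S d}"
          by (intro CollectI exI[of _ "w - smult c x"] exI[of _ c]) simp
      qed
      show "{w + smult c x | w c. w \<in> S d} \<subseteq> S (Suc d)"
      proof
        fix v assume "v \<in> {w + smult c x | w c. w \<in> S d}"
        then obtain w c where "v = w + smult c x" "w \<in> S d" by blast
        moreover have "S d \<subseteq> S (Suc d)" unfolding S_def by auto
        ultimately show "v \<in> S (Suc d)" using sub x(1) unfolding poly_subspace_def by blast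
      qed
    qed
    thus ?thesis by blast
  next
    case False
    hence "S (Suc d) = S d" unfolding S_def ge_split by blast
    thus ?thesis by blast
  qed
qed

text \<open>Closedness propagates from the multiples of \<open>rho\<close> (\<open>d = 0\<close>) to all of \<open>W\<close>
  (\<open>d = degree rho\<close>).\<close>

lemma poly_closed_mod_filtration:
  fixes rho :: "complex poly"
  assumes rho: "rho \<noteq> 0" "\<And>q. rho * q \<in> W" and W: "poly_subspace W"
  shows "poly_closed {w \<in> W. \<forall>i\<ge>d. coeff (w mod rho) i = 0}"
proof (induction d)
  case 0
  have "(\<forall>i\<ge>0. coeff (w mod rho) i = 0) \<longleftrightarrow> rho dvd w" for w
    unfolding dvd_eq_mod_eq_0 by (auto intro: poly_eqI)
  hence "{w \<in> W. \<forall>i\<ge>0. coeff (w mod rho) i = 0} = {w. rho dvd w}"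
    using rho(2) by (auto elim: dvdE)
  thus ?case using poly_closed_multiples[OF rho(1)] by simp
next
  case (Suc d)
  let ?S = "\<lambda>d. {w \<in> W. \<forall>i\<ge>d. coeff (w mod rho) i = 0}"
  have sub: "poly_subspace (?S d)"
    using W unfolding poly_subspace_def by (auto simp: poly_mod_add_left mod_smult_left)
  from mod_filtration_step[OF W, where rho = rho and d = d]
  show ?case
  proof
    assume "?S (Suc d) = ?S d"
    thus ?case using Suc.IH by simp
  next
    assume "\<exists>x. ?S (Suc d) = {w + smult c x | w c. w \<in> ?S d}"
    then obtain x where "?S (Suc d) = {w + smult c x | w c. w \<in> ?S d}" by blast
    thus ?case using poly_closed_add_line[OF sub Suc.IH] by simp
  qed
qed

lemma poly_closed_classS:
  assumes "V \<in> classS"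
  shows "poly_closed V"
proof -
  obtain rho where rho: "rho \<noteq> 0" "\<And>q. rho * q \<in> V" using assms unfolding classS_def by blast
  have "poly_subspace V" using assms unfolding classS_def poly_subspace_def by blast
  hence "poly_closed {w \<in> V. \<forall>i\<ge>degree rho. coeff (w mod rho) i = 0}"
    by (rule poly_closed_mod_filtration[OF rho])
  moreover have "coeff (w mod rho) i = 0" if "degree rho \<le> i" for w i
    using degree_mod_less[OF rho(1), of w] that by (auto intro: coeff_eq_0)
  hence "{w \<in> V. \<forall>i\<ge>degree rho. coeff (w mod rho) i = 0} = V" by blast
  ultimately show ?thesis by simp
qed

lemma poly_in_H_closure_iff:
  assumes "V \<in> classS"
  shows "poly w \<in> H_closure V \<longleftrightarrow> w \<in> V"
proof
  show "poly w \<in> H_closure V \<Longrightarrow> w \<in> V"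
    using poly_closedD[OF poly_closed_classS[OF assms]] unfolding H_closure_iff by blast
  show "w \<in> V \<Longrightarrow> poly w \<in> H_closure V"
    unfolding H_closure_iff by (simp add: compactly_approximable_refl)
qed

lemma entire_eq_poly_plus_multiple:
  fixes rho :: "complex poly"
  assumes "rho \<noteq> 0" "entire F"
  shows "\<exists>r h. entire h \<and> (\<forall>z. F z = poly r z + poly rho z * h z)"
  using assms
proof (induction "degree rho" arbitrary: rho F rule: less_induct)
  case less
  show ?case
  proof (cases "degree rho = 0")
    case True
    then obtain c where rho: "rho = [:c:]" "c \<noteq> 0" using less.prems(1) by (metis degree_eq_zeroE pCons_0_0)
    have "entire (\<lambda>z. inverse c * F z)"
      using less.prems(2) unfolding entire_def by (intro holomorphic_intros) auto
    moreover have "F z = poly 0 z + poly rho z * (inverse c * F z)" for z using rho by simp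
    ultimately show ?thesis by blast
  next
    case False
    then obtain a rho' where rho: "rho = [:-a, 1:] * rho'" "rho' \<noteq> 0" "degree rho' < degree rho"
      by (rule linear_factorE)
    obtain F1 where F1: "entire F1" "\<And>z. F z = F a + (z - a) * F1 z"
      using entire_divide_linear[OF less.prems(2)] by blast
    obtain r h where rh: "entire h" "\<forall>z. F1 z = poly r z + poly rho' z * h z"
      using less.hyps[OF rho(3) rho(2) F1(1)] by blast
    have "F z = poly ([:F a:] + [:-a, 1:] * r) z + poly rho z * h z" for z
      using F1(2)[of z] rh(2) unfolding rho(1) by (simp add: algebra_simps)
    thus ?thesis using rh(1) by blast
  qed
qed

lemma exp_cancel [simp]:
  fixes a x :: complex
  shows "exp (- a) * (exp a * x) = x" "exp a * (exp (- a) * x) = x"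
proof -
  have "exp (- a) * (exp a * x) = (exp a * exp (- a)) * x" "exp a * (exp (- a) * x) = (exp a * exp (- a)) * x"
    by (simp_all only: ac_simps)
  thus "exp (- a) * (exp a * x) = x" "exp a * (exp (- a) * x) = x"
    by (simp_all only: exp_minus_inverse mult_1_left)
qed

lemma H_closure_add_multiple:
  assumes "\<forall>u\<in>U. \<forall>v\<in>U. u + v \<in> U" "\<And>q. rho * q \<in> U" "u \<in> U" "entire k"
  shows "(\<lambda>z. poly u z + poly rho z * k z) \<in> H_closure U"
  unfolding H_closure_iff
proof
  show "entire (\<lambda>z. poly u z + poly rho z * k z)"
    using assms(4) unfolding entire_def by (intro holomorphic_intros) auto
  have "compactly_approximable ((\<lambda>a z. poly u z + poly rho z * a z) ` range poly)
      (\<lambda>z. poly u z + poly rho z * k z)"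
    by (intro compactly_approximable_affine entire_compactly_approximable_by_polys assms(4)
        entire_imp_continuous_on entire_poly)
  moreover have "(\<lambda>a z. poly u z + poly rho z * a z) ` range poly \<subseteq> poly ` U"
  proof
    fix f assume "f \<in> (\<lambda>a z. poly u z + poly rho z * a z) ` range poly"
    then obtain t where "f = (\<lambda>z. poly u z + poly rho z * poly t z)" by blast
    hence "f = poly (u + rho * t)" by (simp add: fun_eq_iff)
    moreover have "u + rho * t \<in> U" using assms(1-3) by blast
    ultimately show "f \<in> poly ` U" by blast
  qed
  ultimately show "compactly_approximable (poly ` U) (\<lambda>z. poly u z + poly rho z * k z)"
    by (rule compactly_approximable_mono)
qed

section \<open>The action of \<open>\<Gamma>\<close>\<close>

lemma gamma_act_memI:
  "f \<in> H_closure U \<Longrightarrow> (\<And>z. poly q z = exp (poly p z) * f z) \<Longrightarrow> q \<in> gamma_act p U"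
  unfolding gamma_act_def by blast

lemma gamma_act_memE:
  assumes "q \<in> gamma_act p U"
  obtains f where "f \<in> H_closure U" "\<And>z. poly q z = exp (poly p z) * f z"
  using assms unfolding gamma_act_def by blast

text \<open>Write \<open>exp p * u = r + rho * h\<close> and approximate \<open>h\<close> by polynomials \<open>t\<close>: then
  \<open>r + rho * t = exp p * (u + rho * exp (-p) * (t - h))\<close> lies in \<open>gamma_act p U\<close>.\<close>

lemma exp_poly_mult_in_H_closure_gamma_act:
  assumes "U \<in> classS" "u \<in> U"
  shows "(\<lambda>z. exp (poly p z) * poly u z) \<in> H_closure (gamma_act p U)"
proof -
  obtain rho where rho: "rho \<noteq> 0" "\<And>q. rho * q \<in> U" using assms(1) unfolding classS_def by blast
  have add: "\<forall>u\<in>U. \<forall>v\<in>U. u + v \<in> U" using assms(1) unfolding classS_def by blast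
  define F where "F z = exp (poly p z) * poly u z" for z
  have eF: "entire F" unfolding F_def by (intro entire_exp_poly_mult entire_poly)
  obtain r h where rh: "entire h" "\<forall>z. F z = poly r z + poly rho z * h z"
    using entire_eq_poly_plus_multiple[OF rho(1) eF] by blast
  have approx: "compactly_approximable ((\<lambda>a z. poly r z + poly rho z * a z) ` range poly)
      (\<lambda>z. poly r z + poly rho z * h z)"
    by (intro compactly_approximable_affine entire_compactly_approximable_by_polys rh(1)
        entire_imp_continuous_on entire_poly)
  have "(\<lambda>a z. poly r z + poly rho z * a z) ` range poly \<subseteq> poly ` gamma_act p U"
  proof
    fix f assume "f \<in> (\<lambda>a z. poly r z + poly rho z * a z) ` range poly"
    then obtain t where f: "f = (\<lambda>z. poly r z + poly rho z * poly t z)" by blast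
    define k where "k z = exp (- poly p z) * (poly t z - h z)" for z
    have "entire k" unfolding k_def using rh(1) unfolding entire_def by (intro holomorphic_intros) auto
    hence "(\<lambda>z. poly u z + poly rho z * k z) \<in> H_closure U"
      by (rule H_closure_add_multiple[OF add rho(2) assms(2)])
    moreover have "poly (r + rho * t) z = exp (poly p z) * (poly u z + poly rho z * k z)" for z
    proof -
      have "exp (poly p z) * k z = poly t z - h z" unfolding k_def by simp
      hence "poly t z = h z + exp (poly p z) * k z" by simp
      moreover have "poly r z = exp (poly p z) * poly u z - poly rho z * h z"
        using rh(2) unfolding F_def by (simp add: eq_diff_eq)
      ultimately show ?thesis by (simp add: algebra_simps)
    qed
    ultimately have "r + rho * t \<in> gamma_act p U" by (rule gamma_act_memI)
    moreover have "f = poly (r + rho * t)" using f by (simp add: fun_eq_iff)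
    ultimately show "f \<in> poly ` gamma_act p U" by blast
  qed
  hence "compactly_approximable (poly ` gamma_act p U) (\<lambda>z. poly r z + poly rho z * h z)"
    by (rule compactly_approximable_mono[OF approx])
  moreover have "F = (\<lambda>z. poly r z + poly rho z * h z)" using rh(2) by (simp add: fun_eq_iff)
  ultimately show ?thesis using eF unfolding H_closure_iff F_def by simp
qed

lemma exp_uminus_mult_in_H_closure:
  assumes g: "g \<in> H_closure (gamma_act p U)"
  shows "(\<lambda>z. exp (- poly p z) * g z) \<in> H_closure U"
proof -
  have "compactly_approximable ((\<lambda>a z. 0 + exp (- poly p z) * a z) ` poly ` gamma_act p U)
      (\<lambda>z. 0 + exp (- poly p z) * g z)"
    using g unfolding H_closure_iff by (intro compactly_approximable_affine continuous_intros) auto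
  moreover have "compactly_approximable (poly ` U) a"
    if "a \<in> (\<lambda>a z. 0 + exp (- poly p z) * a z) ` poly ` gamma_act p U" for a
  proof -
    from that obtain q where q: "q \<in> gamma_act p U" "a = (\<lambda>z. exp (- poly p z) * poly q z)" by auto
    then obtain f where f: "f \<in> H_closure U" "\<And>z. poly q z = exp (poly p z) * f z"
      by (auto elim: gamma_act_memE)
    have "a = f" using q(2) f(2) by (simp add: fun_eq_iff)
    thus ?thesis using f(1) unfolding H_closure_iff by blast
  qed
  ultimately have "compactly_approximable (poly ` U) (\<lambda>z. exp (- poly p z) * g z)"
    using compactly_approximable_trans by fastforce
  moreover have "entire (\<lambda>z. exp (- poly p z) * g z)"
    using g unfolding H_closure_iff entire_def by (intro holomorphic_intros) auto
  ultimately show ?thesis unfolding H_closure_iff by blast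
qed

lemma gamma_act_uminus_gamma_act:
  assumes "U \<in> classS"
  shows "gamma_act (- p) (gamma_act p U) = U"
proof (intro set_eqI iffI)
  fix q assume "q \<in> gamma_act (- p) (gamma_act p U)"
  then obtain f where f: "f \<in> H_closure (gamma_act p U)" "\<And>z. poly q z = exp (poly (- p) z) * f z"
    by (rule gamma_act_memE) blast
  have "(\<lambda>z. exp (- poly p z) * f z) \<in> H_closure U" using f(1) by (rule exp_uminus_mult_in_H_closure)
  moreover have "(\<lambda>z. exp (- poly p z) * f z) = poly q" using f(2) by (simp add: fun_eq_iff)
  ultimately show "q \<in> U" using poly_in_H_closure_iff[OF assms] by simp
next
  fix q assume "q \<in> U"
  hence "(\<lambda>z. exp (poly p z) * poly q z) \<in> H_closure (gamma_act p U)"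
    by (rule exp_poly_mult_in_H_closure_gamma_act[OF assms])
  thus "q \<in> gamma_act (- p) (gamma_act p U)" by (rule gamma_act_memI) simp
qed

section \<open>Differential operators on closures\<close>

definition poly_op_eval :: "(nat \<Rightarrow> complex poly) \<Rightarrow> nat \<Rightarrow> (complex \<Rightarrow> complex) \<Rightarrow> complex \<Rightarrow> complex" where
  "poly_op_eval c N F z = (\<Sum>k\<le>N. poly (c k) z * (deriv ^^ k) F z)"

lemma entire_poly_op_eval: "entire F \<Longrightarrow> entire (poly_op_eval c N F)"
  unfolding entire_def poly_op_eval_def by (intro holomorphic_intros holomorphic_higher_deriv) auto

text \<open>Cauchy's estimates on unit discs make differential operators with polynomial coefficients
  continuous for compact convergence.\<close>

lemma compactly_approximable_poly_op_eval:
  assumes "entire f" "\<And>a. a \<in> A \<Longrightarrow> entire a" "compactly_approximable A f"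
  shows "compactly_approximable (poly_op_eval c N ` A) (poly_op_eval c N f)"
proof (rule compactly_approximableI)
  fix K :: "complex set" and e :: real
  assume K: "compact K" and e: "e > 0"
  have "continuous_on K (\<lambda>z. \<Sum>k\<le>N. norm (poly (c k) z) * fact k)" by (intro continuous_intros)
  then obtain B where B: "B > 0" "\<And>z. z \<in> K \<Longrightarrow> norm (\<Sum>k\<le>N. norm (poly (c k) z) * fact k) \<le> B"
    using compact_norm_bound[OF K] by blast
  obtain R where R: "K \<subseteq> ball 0 R" using bounded_subset_ballD[OF compact_imp_bounded[OF K]] by blast
  have "e / (2 * B) > 0" using e B(1) by simp
  then obtain a where a: "a \<in> A" "\<forall>w\<in>cball 0 (R + 1). norm (f w - a w) < e / (2 * B)"
    using compactly_approximableD[OF assms(3) compact_cball[of 0 "R + 1"]] by blast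
  have "norm (poly_op_eval c N f z - poly_op_eval c N a z) < e" if z: "z \<in> K" for z
  proof -
    have "norm (f w - a w) < e / (2 * B)" if "w \<in> cball z 1" for w
    proof -
      have "norm w \<le> norm z + norm (w - z)" by (metis add.commute diff_add_cancel norm_triangle_ineq)
      hence "w \<in> cball 0 (R + 1)" using that z R by (auto simp: dist_norm norm_minus_commute)
      thus ?thesis using a(2) by blast
    qed
    hence dk: "norm ((deriv ^^ k) f z - (deriv ^^ k) a z) \<le> fact k * (e / (2 * B))" for k
      by (rule higher_deriv_diff_bound[OF assms(1) assms(2)[OF a(1)]])
    have "norm (poly_op_eval c N f z - poly_op_eval c N a z)
        = norm (\<Sum>k\<le>N. poly (c k) z * ((deriv ^^ k) f z - (deriv ^^ k) a z))"
      unfolding poly_op_eval_def by (simp add: sum_subtractf algebra_simps)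
    also have "\<dots> \<le> (\<Sum>k\<le>N. norm (poly (c k) z * ((deriv ^^ k) f z - (deriv ^^ k) a z)))"
      by (rule norm_sum)
    also have "\<dots> \<le> (\<Sum>k\<le>N. norm (poly (c k) z) * (fact k * (e / (2 * B))))"
      unfolding norm_mult by (intro sum_mono mult_left_mono dk norm_ge_zero)
    also have "\<dots> = (\<Sum>k\<le>N. norm (poly (c k) z) * fact k) * (e / (2 * B))"
      by (simp only: sum_distrib_right mult.assoc)
    also have "\<dots> \<le> B * (e / (2 * B))"
      using B(2)[OF z] e B(1) by (intro mult_right_mono) auto
    also have "\<dots> < e" using B(1) e by simp
    finally show ?thesis .
  qed
  thus "\<exists>b\<in>poly_op_eval c N ` A. \<forall>z\<in>K. norm (poly_op_eval c N f z - b z) < e"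
    using a(1) by (intro bexI[of _ "poly_op_eval c N a"]) auto
qed

text \<open>Multiplying by the product of the reduced denominators of the coefficients.\<close>

lemma op_clear_denominators:
  obtains Q c where "Q \<noteq> 0" "\<And>z. op_regular_at D z \<Longrightarrow> poly Q z \<noteq> 0"
    "\<And>z F. op_regular_at D z \<Longrightarrow> poly_op_eval c (degree D) F z = poly Q z * op_eval D F z"
proof
  define N where "N = degree D"
  define qd where "qd k = snd (quot_of_fract (coeff D k))" for k
  define qn where "qn k = fst (quot_of_fract (coeff D k))" for k
  define Q where "Q = (\<Prod>k\<le>N. qd k)"
  define c where "c k = qn k * (Q div qd k)" for k
  have qd0: "qd k \<noteq> 0" for k unfolding qd_def by simp
  show "Q \<noteq> 0" unfolding Q_def using qd0 by simp
  have reg: "poly (qd k) z \<noteq> 0" if "op_regular_at D z" for z k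
    using that unfolding op_regular_at_def rat_pole_def qd_def by auto
  show "poly Q z \<noteq> 0" if "op_regular_at D z" for z
    unfolding Q_def using reg[OF that] by (simp add: poly_prod)
  have "poly Q z * rat_eval (coeff D k) z = poly (c k) z" if "op_regular_at D z" "k \<le> N" for z k
  proof -
    have "qd k dvd Q" unfolding Q_def using that(2) by (intro dvd_prodI) auto
    hence "poly Q z = poly (qd k) z * poly (Q div qd k) z" by (metis dvd_mult_div_cancel poly_mult)
    thus ?thesis using reg[OF that(1)] unfolding c_def rat_eval_def qd_def qn_def by simp
  qed
  thus "poly_op_eval c (degree D) F z = poly Q z * op_eval D F z" if "op_regular_at D z" for z F
    unfolding poly_op_eval_def op_eval_def N_def[symmetric] sum_distrib_left
    using that by (intro sum.cong) (auto simp: mult.assoc[symmetric])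
qed

lemma op_eval_poly_eq:
  assumes "op_apply D u = to_fract v" "op_regular_at D z"
  shows "op_eval D (poly u) z = poly v z"
  using op_apply_has_value[OF assms(2), of u] rat_has_value_to_fract[of v z] assms(1)
  unfolding rat_has_value_def by simp

text \<open>Clear denominators, pass to the limit, and divide by the common denominator again.\<close>

lemma Dops_H_closure:
  assumes D: "D \<in> Dops U V" and f: "f \<in> H_closure U"
  shows "\<exists>g\<in>H_closure V. \<forall>z. op_regular_at D z \<longrightarrow> g z = op_eval D f z"
proof -
  obtain Q c where Q: "Q \<noteq> 0" "\<And>z. op_regular_at D z \<Longrightarrow> poly Q z \<noteq> 0"
    "\<And>z F. op_regular_at D z \<Longrightarrow> poly_op_eval c (degree D) F z = poly Q z * op_eval D F z"
    using op_clear_denominators[of D] by blast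
  let ?L = "poly_op_eval c (degree D)"
  have ef: "entire f" and af: "compactly_approximable (poly ` U) f" using f unfolding H_closure_iff by auto
  have incl: "?L ` poly ` U \<subseteq> (\<lambda>a z. poly Q z * a z) ` poly ` V"
  proof
    fix F assume "F \<in> ?L ` poly ` U"
    then obtain u where u: "u \<in> U" "F = ?L (poly u)" by blast
    then obtain v where v: "v \<in> V" "op_apply D u = to_fract v" using D unfolding Dops_def by blast
    have "?L (poly u) = (\<lambda>z. poly Q z * poly v z)"
    proof (rule continuous_eq_off_finite[OF _ _ finite_not_op_regular[of D]])
      show "continuous_on UNIV (?L (poly u))" by (intro entire_imp_continuous_on entire_poly_op_eval entire_poly)
      show "?L (poly u) z = poly Q z * poly v z" if "z \<notin> {z. \<not> op_regular_at D z}" for z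
        using that Q(3) op_eval_poly_eq[OF v(2)] by simp
    qed (intro continuous_intros)
    thus "F \<in> (\<lambda>a z. poly Q z * a z) ` poly ` V" using u(2) v(1) by blast
  qed
  have "\<And>a. a \<in> poly ` U \<Longrightarrow> entire a" by auto
  hence "compactly_approximable (?L ` poly ` U) (?L f)"
    by (rule compactly_approximable_poly_op_eval[OF ef _ af])
  hence approx: "compactly_approximable ((\<lambda>a z. poly Q z * a z) ` poly ` V) (?L f)"
    using incl by (rule compactly_approximable_mono)
  have "\<And>a. a \<in> poly ` V \<Longrightarrow> entire a" by auto
  then obtain g where g: "entire g" "\<forall>z. ?L f z = poly Q z * g z" "compactly_approximable (poly ` V) g"
    using compactly_approximable_divide_poly[OF Q(1) entire_poly_op_eval[OF ef] _ approx] by blast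
  have "g z = op_eval D f z" if "op_regular_at D z" for z
  proof -
    have "poly Q z * g z = poly Q z * op_eval D f z"
      using g(2)[rule_format, of z] Q(3)[OF that, of f] by (rule trans[OF sym])
    thus ?thesis using Q(2)[OF that] by simp
  qed
  moreover have "g \<in> H_closure V" using g(1,3) unfolding H_closure_iff by blast
  ultimately show ?thesis by blast
qed

lemma conj_opD:
  assumes "conj_op p D E" "entire f" "op_regular_at D z" "op_regular_at E z"
  shows "op_eval E f z = exp (poly p z) * op_eval D (\<lambda>w. exp (- poly p w) * f w) z"
  using assms unfolding conj_op_def by blast

lemma Dops_conj_op:
  assumes D: "D \<in> Dops U V" and DE: "conj_op p D E"
  shows "E \<in> Dops (gamma_act p U) (gamma_act p V)"
  unfolding Dops_def
proof (intro CollectI ballI)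
  fix q assume "q \<in> gamma_act p U"
  then obtain f where f: "f \<in> H_closure U" "\<And>z. poly q z = exp (poly p z) * f z"
    by (rule gamma_act_memE) blast
  obtain g where g: "g \<in> H_closure V" "\<And>z. op_regular_at D z \<Longrightarrow> g z = op_eval D f z"
    using Dops_H_closure[OF D f(1)] by blast
  have f_eq: "(\<lambda>w. exp (- poly p w) * poly q w) = f" using f(2) by (simp add: fun_eq_iff)
  have "op_eval E (poly q) z = exp (poly p z) * g z"
    if "z \<notin> {z. \<not> op_regular_at D z}" "op_regular_at E z" for z
    using conj_opD[OF DE entire_poly, of z q] that g(2) by (simp add: f_eq)
  moreover have "continuous_on UNIV (\<lambda>z. exp (poly p z) * g z)"
    using g(1) unfolding H_closure_iff by (intro entire_imp_continuous_on entire_exp_poly_mult) blast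
  ultimately obtain w where w: "op_apply E q = to_fract w" "\<forall>z. poly w z = exp (poly p z) * g z"
    using op_apply_eq_poly[OF finite_not_op_regular[of D]] by blast
  have "w \<in> gamma_act p V" using g(1) w(2) by (intro gamma_act_memI) auto
  thus "\<exists>v\<in>gamma_act p V. op_apply E q = to_fract v" using w(1) by blast
qed

section \<open>Conjugation by \<open>exp p\<close>\<close>

primrec exp_poly_deriv :: "complex poly \<Rightarrow> nat \<Rightarrow> complex poly" where
  "exp_poly_deriv q 0 = 1"
| "exp_poly_deriv q (Suc m) = pderiv (exp_poly_deriv q m) + pderiv q * exp_poly_deriv q m"

lemma higher_deriv_exp_poly:
  "(deriv ^^ m) (\<lambda>w. exp (poly q w)) = (\<lambda>w. poly (exp_poly_deriv q m) w * exp (poly q w))"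
proof (induction m)
  case (Suc m)
  have "deriv (\<lambda>w. poly (exp_poly_deriv q m) w * exp (poly q w)) =
      (\<lambda>w. poly (exp_poly_deriv q (Suc m)) w * exp (poly q w))"
  proof (rule ext, rule DERIV_imp_deriv)
    fix x
    have "((\<lambda>w. poly (exp_poly_deriv q m) w * exp (poly q w)) has_field_derivative
        poly (pderiv (exp_poly_deriv q m)) x * exp (poly q x) +
        exp (poly q x) * poly (pderiv q) x * poly (exp_poly_deriv q m) x) (at x)"
      by (rule DERIV_mult[OF poly_DERIV DERIV_chain2[OF DERIV_exp poly_DERIV]])
    thus "((\<lambda>w. poly (exp_poly_deriv q m) w * exp (poly q w)) has_field_derivative
        poly (exp_poly_deriv q (Suc m)) x * exp (poly q x)) (at x)"
      by (simp add: algebra_simps)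
  qed
  thus ?case using Suc by simp
qed simp

lemma higher_deriv_exp_uminus_mult:
  assumes "entire f"
  shows "(deriv ^^ k) (\<lambda>w. exp (- poly p w) * f w) z * exp (poly p z) =
     (\<Sum>i\<le>k. of_nat (k choose i) * poly (exp_poly_deriv (- p) (k - i)) z * (deriv ^^ i) f z)"
proof -
  have hol: "f holomorphic_on UNIV" "(\<lambda>w. exp (poly (- p) w)) holomorphic_on UNIV"
    using assms unfolding entire_def by (auto intro!: holomorphic_intros)
  have exp_deriv: "(deriv ^^ m) (\<lambda>w. exp (- poly p w)) = (\<lambda>w. poly (exp_poly_deriv (- p) m) w * exp (- poly p w))" for m
    using higher_deriv_exp_poly[of m "- p"] by simp
  have "(\<lambda>w. exp (- poly p w) * f w) = (\<lambda>w. f w * exp (poly (- p) w))" by (simp add: mult.commute)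
  hence "(deriv ^^ k) (\<lambda>w. exp (- poly p w) * f w) z = exp (- poly p z) *
      (\<Sum>i\<le>k. of_nat (k choose i) * poly (exp_poly_deriv (- p) (k - i)) z * (deriv ^^ i) f z)"
    using higher_deriv_mult[OF hol, of z k] by (simp add: exp_deriv atLeast0AtMost sum_distrib_left algebra_simps)
  thus ?thesis by (simp add: mult.commute[of _ "exp (poly p z)"])
qed

lemma sum_atMost_triangle_swap:
  "(\<Sum>k\<le>(N::nat). \<Sum>i\<le>k. g k i) = (\<Sum>i\<le>N. \<Sum>k\<in>{i..N}. (g k i :: 'a::comm_monoid_add))"
proof -
  have "(\<Sum>k\<le>N. \<Sum>i\<le>k. g k i) = (\<Sum>k\<in>{..N}. \<Sum>i\<in>{i. i \<in> {..N} \<and> i \<le> k}. g k i)"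
    by (intro sum.cong) (auto intro: order_trans)
  also have "\<dots> = (\<Sum>i\<in>{..N}. \<Sum>k\<in>{k. k \<in> {..N} \<and> i \<le> k}. g k i)"
    by (rule sum.swap_restrict) auto
  also have "\<dots> = (\<Sum>i\<le>N. \<Sum>k\<in>{i..N}. g k i)"
    by (intro sum.cong) auto
  finally show ?thesis .
qed

text \<open>The explicit conjugate \<open>exp p * D * exp (-p)\<close>: by Leibniz' rule its \<open>j\<close>-th coefficient is
  \<open>\<Sum>k. r_k * (k choose j) * P_(k-j)\<close>, where \<open>(exp (-p))^(m) = P_m * exp (-p)\<close>.\<close>

definition conj_coeff :: "complex poly \<Rightarrow> diffop \<Rightarrow> nat \<Rightarrow> complex poly fract" where
  "conj_coeff p D j =
     (\<Sum>k\<in>{j..degree D}. coeff D k * to_fract (smult (of_nat (k choose j)) (exp_poly_deriv (- p) (k - j))))"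

definition conj_diffop :: "complex poly \<Rightarrow> diffop \<Rightarrow> diffop" where
  "conj_diffop p D = (\<Sum>j\<le>degree D. monom (conj_coeff p D j) j)"

lemma coeff_conj_diffop: "coeff (conj_diffop p D) j = (if j \<le> degree D then conj_coeff p D j else 0)"
  unfolding conj_diffop_def by (simp add: coeff_sum coeff_monom)

lemma degree_conj_diffop_le: "degree (conj_diffop p D) \<le> degree D"
  by (rule degree_le) (simp add: coeff_conj_diffop)

lemma op_eval_eq_sum_atMost:
  assumes "degree D \<le> N"
  shows "op_eval D f z = (\<Sum>k\<le>N. rat_eval (coeff D k) z * (deriv ^^ k) f z)"
  unfolding op_eval_def
proof (rule sum.mono_neutral_left)
  show "\<forall>i\<in>{..N} - {..degree D}. rat_eval (coeff D i) z * (deriv ^^ i) f z = 0"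
    using rat_has_value_to_fract[of 0 z] by (auto simp: coeff_eq_0 rat_has_value_def)
qed (use assms in auto)

lemma rat_eval_conj_coeff:
  assumes "op_regular_at D z"
  shows "rat_eval (conj_coeff p D j) z =
    (\<Sum>k\<in>{j..degree D}. rat_eval (coeff D k) z * (of_nat (k choose j) * poly (exp_poly_deriv (- p) (k - j)) z))"
proof -
  have "rat_has_value (coeff D k) z (rat_eval (coeff D k) z)" for k
    using assms unfolding op_regular_at_def rat_has_value_def by simp
  hence "rat_has_value (conj_coeff p D j) z
      (\<Sum>k\<in>{j..degree D}. rat_eval (coeff D k) z * poly (smult (of_nat (k choose j)) (exp_poly_deriv (- p) (k - j))) z)"
    unfolding conj_coeff_def by (intro rat_has_value_sum rat_has_value_mult rat_has_value_to_fract)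
  thus ?thesis unfolding rat_has_value_def by simp
qed

lemma conj_op_conj_diffop: "conj_op p D (conj_diffop p D)"
  unfolding conj_op_def
proof (intro allI impI)
  fix f z assume f: "entire f" and "op_regular_at D z \<and> op_regular_at (conj_diffop p D) z"
  hence r: "op_regular_at D z" by simp
  define N where "N = degree D"
  define a where "a k i = rat_eval (coeff D k) z * (of_nat (k choose i) * poly (exp_poly_deriv (- p) (k - i)) z)
      * (deriv ^^ i) f z" for k i
  have "op_eval (conj_diffop p D) f z = (\<Sum>j\<le>N. rat_eval (coeff (conj_diffop p D) j) z * (deriv ^^ j) f z)"
    using op_eval_eq_sum_atMost[OF degree_conj_diffop_le] unfolding N_def .
  also have "\<dots> = (\<Sum>j\<le>N. \<Sum>k\<in>{j..N}. a k j)"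
    by (intro sum.cong refl) (simp add: coeff_conj_diffop rat_eval_conj_coeff[OF r] N_def a_def sum_distrib_right)
  also have "\<dots> = (\<Sum>k\<le>N. \<Sum>i\<le>k. a k i)" by (rule sum_atMost_triangle_swap[symmetric])
  also have "\<dots> = (\<Sum>k\<le>N. rat_eval (coeff D k) z * ((deriv ^^ k) (\<lambda>w. exp (- poly p w) * f w) z * exp (poly p z)))"
    unfolding higher_deriv_exp_uminus_mult[OF f] a_def sum_distrib_left by (simp add: algebra_simps)
  also have "\<dots> = exp (poly p z) * op_eval D (\<lambda>w. exp (- poly p w) * f w) z"
    unfolding op_eval_def N_def sum_distrib_left by (simp add: algebra_simps)
  finally show "op_eval (conj_diffop p D) f z = exp (poly p z) * op_eval D (\<lambda>w. exp (- poly p w) * f w) z" .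
qed

lemma conj_op_uminus:
  assumes "conj_op p D E"
  shows "conj_op (- p) E D"
  unfolding conj_op_def
proof (intro allI impI)
  fix f z assume f: "entire f" and rz: "op_regular_at E z \<and> op_regular_at D z"
  have "op_eval E (\<lambda>w. exp (poly p w) * f w) z = exp (poly p z) * op_eval D f z"
    using conj_opD[OF assms entire_exp_poly_mult[OF f]] rz by simp
  hence "op_eval D f z = exp (- poly p z) * op_eval E (\<lambda>w. exp (poly p w) * f w) z" by simp
  thus "op_eval D f z = exp (poly (- p) z) * op_eval E (\<lambda>w. exp (- poly (- p) w) * f w) z" by simp
qed

theorem corollary2p3:
  fixes U V :: "complex poly set" and p :: "complex poly"
  assumes "U \<in> classS" and "V \<in> classS"
  shows "Dops (gamma_act p U) (gamma_act p V) = {E. \<exists>D\<in>Dops U V. conj_op p D E}"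
proof
  show "Dops (gamma_act p U) (gamma_act p V) \<subseteq> {E. \<exists>D\<in>Dops U V. conj_op p D E}"
  proof
    fix E assume E: "E \<in> Dops (gamma_act p U) (gamma_act p V)"
    let ?D = "conj_diffop (- p) E"
    have "conj_op (- p) E ?D" by (rule conj_op_conj_diffop)
    hence "?D \<in> Dops (gamma_act (- p) (gamma_act p U)) (gamma_act (- p) (gamma_act p V))"
      by (rule Dops_conj_op[OF E])
    hence "?D \<in> Dops U V" using gamma_act_uminus_gamma_act assms by simp
    moreover have "conj_op p ?D E" using conj_op_uminus[OF \<open>conj_op (- p) E ?D\<close>] by simp
    ultimately show "E \<in> {E. \<exists>D\<in>Dops U V. conj_op p D E}" by blast
  qed
  show "{E. \<exists>D\<in>Dops U V. conj_op p D E} \<subseteq> Dops (gamma_act p U) (gamma_act p V)"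
    using Dops_conj_op by blast
qed

end
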